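(* Let $n\in\mathbb{N}$ and $1\le K\le 2^n$. For every quantum algorithm $\mathcal A$ making $T$ queries to $\varphi$ and $\varphi^{-1}$ and outputting $(x,y)\in\{0,1\}^n\times\{0,1\}^n$, if for every permutation $\varphi$ of $\{0,1\}^{2n}$ having exactly $K$ zero pairs $\mathcal A$ outputs a zero pair of $\varphi$ with probability at least $\epsilon>0$, then $$\epsilon\le\frac{8(T+1)^2K}{2^n}.$$
   Context: A zero pair of a permutation $\varphi$ of $\{0,1\}^{2n}$ is a pair $(x,y)\in\{0,1\}^n\times\{0,1\}^n$ with $\varphi(x\|0^n)=y\|0^n$. Queries are to the unitaries $O_\varphi:|a\rangle|b\rangle\mapsto|a\rangle|b\oplus\varphi(a)\rangle$ and $O_{\varphi^{-1}}:|a\rangle|b\rangle\mapsto|a\rangle|b\oplus\varphi^{-1}(a)\rangle$; the success probability is over the algorithm's internal randomness and measurements. *)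

theory Defs
  imports Complex_Main "HOL-Combinatorics.Permutations"
begin

(* Bit strings in {0,1}^k are encoded as naturals below 2^k (most significant bit first),
so the concatenation x || 0^n of x in {0,1}^n is x * 2^n.  XOR of bit strings is the
bitwise xor on nat. *)

(* Computational basis of the algorithm's register: (query register a in {0,1}^(2n),
answer register b in {0,1}^(2n), workspace w in {0..<m}). *)
type_synonym qbasis = "nat \<times> nat \<times> nat"
type_synonym qstate = "qbasis \<Rightarrow> complex"
type_synonym qop = "qbasis \<Rightarrow> qbasis \<Rightarrow> complex"

definition basis_set :: "nat \<Rightarrow> nat \<Rightarrow> qbasis set" where
  "basis_set n m = {..<2^(2*n)} \<times> {..<2^(2*n)} \<times> {..<m}"

definition is_unitary :: "qbasis set \<Rightarrow> qop \<Rightarrow> bool" where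
  "is_unitary B U \<longleftrightarrow>
     (\<forall>i\<in>B. \<forall>j\<in>B. (\<Sum>k\<in>B. cnj (U k i) * U k j) = (if i = j then 1 else 0))"

definition apply_op :: "qbasis set \<Rightarrow> qop \<Rightarrow> qstate \<Rightarrow> qstate" where
  "apply_op B U \<psi> = (\<lambda>i. if i \<in> B then (\<Sum>j\<in>B. U i j * \<psi> j) else 0)"

definition query_op :: "qbasis set \<Rightarrow> (nat \<Rightarrow> nat) \<Rightarrow> qstate \<Rightarrow> qstate" where
  "query_op B f \<psi> = (\<lambda>(a, b, w). if (a, b, w) \<in> B then \<psi> (a, xor b (f a), w) else 0)"

definition init_state :: qstate where
  "init_state = (\<lambda>i. if i = (0, 0, 0) then 1 else 0)"

(* State after the unitaries U_0, ..., U_t interleaved with t queries; query number t+1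
is to O_phi if ds t, and to O_(phi^-1) otherwise. *)
primrec run_state ::
  "nat \<Rightarrow> nat \<Rightarrow> (nat \<Rightarrow> qop) \<Rightarrow> (nat \<Rightarrow> bool) \<Rightarrow> (nat \<Rightarrow> nat) \<Rightarrow> nat \<Rightarrow> qstate" where
  "run_state n m Us ds \<phi> 0 = apply_op (basis_set n m) (Us 0) init_state"
| "run_state n m Us ds \<phi> (Suc t) =
     apply_op (basis_set n m) (Us (Suc t))
       (query_op (basis_set n m) (if ds t then \<phi> else inv \<phi>) (run_state n m Us ds \<phi> t))"

definition zero_pairs :: "nat \<Rightarrow> (nat \<Rightarrow> nat) \<Rightarrow> (nat \<times> nat) set" where
  "zero_pairs n \<phi> = {(x, y). x < 2^n \<and> y < 2^n \<and> \<phi> (x * 2^n) = y * 2^n}"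

definition success_prob ::
  "nat \<Rightarrow> nat \<Rightarrow> (nat \<Rightarrow> qop) \<Rightarrow> (nat \<Rightarrow> bool) \<Rightarrow> (qbasis \<Rightarrow> nat \<times> nat) \<Rightarrow> nat
     \<Rightarrow> (nat \<Rightarrow> nat) \<Rightarrow> real" where
  "success_prob n m Us ds out T \<phi> =
     (\<Sum>s\<in>basis_set n m. if out s \<in> zero_pairs n \<phi>
                          then (cmod (run_state n m Us ds \<phi> T s))\<^sup>2 else 0)"

end

theory Submission
  imports Defs "HOL-Analysis.L2_Norm"
begin

text \<open>
  Hybrid argument.  Let \<open>\<phi>\<^sub>0\<close> swap \<open>2k \<leftrightarrow> 2k+1\<close> on \<open>{0,1}\<^sup>2\<^sup>n\<close>; it maps \<open>x\<parallel>0\<^sup>n\<close> to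
  \<open>x\<parallel>0\<^sup>n\<^sup>-\<^sup>1 1\<close>, so it has no zero pairs.  Cut \<open>{0,1}\<^sup>n\<close> into \<open>M = \<lfloor>2\<^sup>n/K\<rfloor>\<close> blocks of
  \<open>K\<close> strings and let \<open>\<phi>\<^sub>i\<close> agree with \<open>\<phi>\<^sub>0\<close> except that it fixes the set \<open>S\<^sub>i\<close> of inputs
  \<open>x\<parallel>0\<^sup>n\<close>, \<open>x\<parallel>0\<^sup>n\<^sup>-\<^sup>1 1\<close> with \<open>x\<close> in block \<open>i\<close>; then \<open>\<phi>\<^sub>i\<close> has exactly the \<open>K\<close> zero pairs
  \<open>(x, x)\<close>, \<open>x\<close> in block \<open>i\<close>.  All these maps are involutions, so inverse queries are
  ordinary queries.  The final states of the runs against \<open>\<phi>\<^sub>i\<close> and \<open>\<phi>\<^sub>0\<close> differ in norm by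
  at most twice the total weight that the \<open>\<phi>\<^sub>0\<close>-run puts on \<open>S\<^sub>i\<close> over its \<open>T\<close> queries.
  So success probability \<open>\<epsilon>\<close> on \<open>\<phi>\<^sub>i\<close> forces \<open>\<surd>\<epsilon>\<close> to be at most the weight of the final
  \<open>\<phi>\<^sub>0\<close>-state on the success event of \<open>\<phi>\<^sub>i\<close> plus that query term.  The success events and
  the \<open>S\<^sub>i\<close> are disjoint, so summing over \<open>i\<close> and applying Cauchy--Schwarz gives
  \<open>M\<surd>\<epsilon> \<le> \<surd>M (1 + 2T)\<close>, i.e. \<open>\<epsilon> \<le> (1 + 2T)\<^sup>2/M \<le> 8(T + 1)\<^sup>2K/2\<^sup>n\<close>.
\<close>

section \<open>Norms of states on sets of basis states\<close>

definition norm_on :: "qbasis set \<Rightarrow> qstate \<Rightarrow> real" where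
  "norm_on A \<psi> = L2_set (\<lambda>s. cmod (\<psi> s)) A"

lemma norm_on_nonneg: "0 \<le> norm_on A \<psi>"
  by (simp add: norm_on_def L2_set_nonneg)

lemma power2_norm_on: "(norm_on A \<psi>)\<^sup>2 = (\<Sum>s\<in>A. (cmod (\<psi> s))\<^sup>2)"
  unfolding norm_on_def L2_set_def by (simp add: sum_nonneg)

lemma norm_on_add_le: "norm_on A (\<lambda>s. x s + y s) \<le> norm_on A x + norm_on A y"
proof -
  have "norm_on A (\<lambda>s. x s + y s) \<le> L2_set (\<lambda>s. cmod (x s) + cmod (y s)) A"
    unfolding norm_on_def by (rule L2_set_mono) (auto simp: norm_triangle_ineq)
  also have "\<dots> \<le> norm_on A x + norm_on A y"
    unfolding norm_on_def by (rule L2_set_triangle_ineq)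
  finally show ?thesis .
qed

lemma norm_on_diff_le: "norm_on A (\<lambda>s. x s - y s) \<le> norm_on A x + norm_on A y"
  using norm_on_add_le[of A x "\<lambda>s. - y s"] by (simp add: norm_on_def)

lemma norm_on_mono: "A \<subseteq> B \<Longrightarrow> finite B \<Longrightarrow> norm_on A \<psi> \<le> norm_on B \<psi>"
  unfolding norm_on_def L2_set_def by (intro real_sqrt_le_mono sum_mono2) auto

lemma norm_on_eq_support:
  assumes "C \<subseteq> B" "finite B" "\<And>s. s \<in> B - C \<Longrightarrow> \<psi> s = 0"
  shows "norm_on B \<psi> = norm_on C \<psi>"
  unfolding norm_on_def L2_set_def
  using assms by (intro arg_cong[where f=sqrt] sum.mono_neutral_right) auto

lemma sum_norm_on_disjoint_le:
  assumes I: "finite I" and B: "finite B" and sub: "\<And>i. i \<in> I \<Longrightarrow> A i \<subseteq> B"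
    and disj: "disjoint_family_on A I"
  shows "(\<Sum>i\<in>I. norm_on (A i) \<psi>) \<le> sqrt (card I) * norm_on B \<psi>"
proof -
  have fin_A: "finite (A i)" if "i \<in> I" for i
    using sub[OF that] B finite_subset by blast
  have "(\<Sum>i\<in>I. (norm_on (A i) \<psi>)\<^sup>2) = (\<Sum>s\<in>(\<Union>i\<in>I. A i). (cmod (\<psi> s))\<^sup>2)"
    unfolding power2_norm_on
    by (rule sum.UNION_disjoint[symmetric]) (use I fin_A disj in \<open>auto simp: disjoint_family_on_def\<close>)
  also have "\<dots> \<le> (norm_on B \<psi>)\<^sup>2"
    unfolding power2_norm_on by (rule sum_mono2) (use B sub in auto)
  finally have orthogonal: "L2_set (\<lambda>i. norm_on (A i) \<psi>) I \<le> norm_on B \<psi>"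
    unfolding L2_set_def by (intro real_le_lsqrt norm_on_nonneg)
  have "(\<Sum>i\<in>I. norm_on (A i) \<psi>) = (\<Sum>i\<in>I. \<bar>norm_on (A i) \<psi>\<bar> * \<bar>1\<bar>)"
    by (simp add: norm_on_nonneg)
  also have "\<dots> \<le> L2_set (\<lambda>i. norm_on (A i) \<psi>) I * L2_set (\<lambda>i. 1) I"
    by (rule L2_set_mult_ineq)
  also have "\<dots> \<le> norm_on B \<psi> * sqrt (card I)"
    using orthogonal by (simp add: L2_set_constant mult_right_mono)
  finally show ?thesis by (simp add: mult.commute)
qed

section \<open>Unitaries and queries\<close>

lemma finite_basis_set: "finite (basis_set n m)"
  by (simp add: basis_set_def)

lemma unitary_sum_cnj_mult:
  assumes U: "is_unitary B U" and fin: "finite B"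
  shows "(\<Sum>i\<in>B. cnj (\<Sum>j\<in>B. U i j * \<psi> j) * (\<Sum>k\<in>B. U i k * \<psi> k))
        = (\<Sum>j\<in>B. cnj (\<psi> j) * \<psi> j)"
proof -
  have "(\<Sum>i\<in>B. cnj (\<Sum>j\<in>B. U i j * \<psi> j) * (\<Sum>k\<in>B. U i k * \<psi> k))
      = (\<Sum>i\<in>B. \<Sum>j\<in>B. \<Sum>k\<in>B. cnj (\<psi> j) * \<psi> k * (cnj (U i j) * U i k))"
    by (simp add: cnj_sum sum_distrib_left sum_distrib_right mult_ac)
  also have "\<dots> = (\<Sum>j\<in>B. \<Sum>k\<in>B. \<Sum>i\<in>B. cnj (\<psi> j) * \<psi> k * (cnj (U i j) * U i k))"
    by (subst sum.swap) (rule sum.cong[OF refl], rule sum.swap)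
  also have "\<dots> = (\<Sum>j\<in>B. \<Sum>k\<in>B. cnj (\<psi> j) * \<psi> k * (\<Sum>i\<in>B. cnj (U i j) * U i k))"
    by (simp add: sum_distrib_left)
  also have "\<dots> = (\<Sum>j\<in>B. \<Sum>k\<in>B. cnj (\<psi> j) * \<psi> k * (if j = k then 1 else 0))"
    using U unfolding is_unitary_def by (intro sum.cong refl) simp
  also have "\<dots> = (\<Sum>j\<in>B. cnj (\<psi> j) * \<psi> j)"
    using fin by (simp add: if_distrib cong: if_cong)
  finally show ?thesis .
qed

lemma norm_on_apply_op:
  assumes "is_unitary B U" and "finite B"
  shows "norm_on B (apply_op B U \<psi>) = norm_on B \<psi>"
proof -
  have cmod_sq: "complex_of_real ((cmod z)\<^sup>2) = cnj z * z" for z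
    by (subst complex_norm_square) (rule mult.commute)
  have "complex_of_real ((norm_on B (apply_op B U \<psi>))\<^sup>2) = complex_of_real ((norm_on B \<psi>)\<^sup>2)"
    unfolding power2_norm_on of_real_sum cmod_sq
    using unitary_sum_cnj_mult[OF assms, of \<psi>] by (simp add: apply_op_def)
  then have "(norm_on B (apply_op B U \<psi>))\<^sup>2 = (norm_on B \<psi>)\<^sup>2"
    by (simp only: of_real_eq_iff)
  then show ?thesis
    by (simp add: norm_on_nonneg power2_eq_iff_nonneg)
qed

lemma apply_op_diff:
  "apply_op B U (\<lambda>s. \<psi> s - \<chi> s) = (\<lambda>s. apply_op B U \<psi> s - apply_op B U \<chi> s)"
  by (auto simp: apply_op_def sum_subtractf right_diff_distrib)

lemma query_op_diff:
  "query_op B f (\<lambda>s. \<psi> s - \<chi> s) = (\<lambda>s. query_op B f \<psi> s - query_op B f \<chi> s)"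
  by (auto simp: query_op_def)

lemma xor_less_power2: "(b::nat) < 2 ^ k \<Longrightarrow> c < 2 ^ k \<Longrightarrow> xor b c < 2 ^ k"
  by (metis take_bit_nat_eq_self_iff take_bit_xor take_bit_nat_less_exp)

lemma norm_on_query_op:
  assumes f: "f ` {..<2^(2*n)} \<subseteq> {..<2^(2*n)}"
  shows "norm_on (basis_set n m \<inter> {s. fst s \<in> S}) (query_op (basis_set n m) f \<psi>)
       = norm_on (basis_set n m \<inter> {s. fst s \<in> S}) \<psi>"
proof -
  define C where "C = basis_set n m \<inter> {s. fst s \<in> S}"
  define \<sigma> where "\<sigma> = (\<lambda>(a::nat, b::nat, w::nat). (a, xor b (f a), w))"
  have \<sigma>_\<sigma>: "\<sigma> (\<sigma> s) = s" for s
    by (cases s) (simp add: \<sigma>_def xor.assoc)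
  have "\<sigma> s \<in> C" if "s \<in> C" for s
    using that f xor_less_power2 by (cases s) (auto simp: \<sigma>_def C_def basis_set_def)
  then have bij: "bij_betw \<sigma> C C"
    by (intro bij_betw_byWitness[where f'=\<sigma>]) (auto simp: \<sigma>_\<sigma>)
  have "norm_on C (query_op (basis_set n m) f \<psi>) = L2_set (\<lambda>s. cmod (\<psi> (\<sigma> s))) C"
    unfolding norm_on_def
    by (rule L2_set_cong) (auto simp: query_op_def \<sigma>_def C_def)
  also have "\<dots> = norm_on C \<psi>"
    unfolding norm_on_def L2_set_def
    using sum.reindex_bij_betw[OF bij, of "\<lambda>s. (cmod (\<psi> s))\<^sup>2"] by simp
  finally show ?thesis by (simp add: C_def)
qed

lemma norm_on_query_op_diff_le:
  assumes f: "f ` {..<2^(2*n)} \<subseteq> {..<2^(2*n)}" and g: "g ` {..<2^(2*n)} \<subseteq> {..<2^(2*n)}"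
    and agree: "\<And>a. a \<notin> S \<Longrightarrow> f a = g a"
  shows "norm_on (basis_set n m)
           (\<lambda>s. query_op (basis_set n m) f \<psi> s - query_op (basis_set n m) g \<psi> s)
       \<le> 2 * norm_on (basis_set n m \<inter> {s. fst s \<in> S}) \<psi>"
proof -
  define B where "B = basis_set n m"
  define C where "C = B \<inter> {s. fst s \<in> S}"
  have "norm_on B (\<lambda>s. query_op B f \<psi> s - query_op B g \<psi> s)
      = norm_on C (\<lambda>s. query_op B f \<psi> s - query_op B g \<psi> s)"
    by (rule norm_on_eq_support) (auto simp: C_def B_def finite_basis_set query_op_def agree)
  also have "\<dots> \<le> norm_on C (query_op B f \<psi>) + norm_on C (query_op B g \<psi>)"
    by (rule norm_on_diff_le)
  also have "\<dots> = 2 * norm_on C \<psi>"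
    using norm_on_query_op[OF f, of m S \<psi>] norm_on_query_op[OF g, of m S \<psi>]
    by (simp add: B_def C_def)
  finally show ?thesis by (simp add: B_def C_def)
qed

section \<open>Runs of the algorithm\<close>

lemma norm_on_init_state:
  assumes "1 \<le> m" shows "norm_on (basis_set n m) init_state = 1"
proof -
  have "(0, 0, 0) \<in> basis_set n m" using assms by (simp add: basis_set_def)
  then have "(norm_on (basis_set n m) init_state)\<^sup>2 = 1"
    unfolding power2_norm_on init_state_def
    by (simp add: finite_basis_set if_distrib[of "\<lambda>z. (cmod z)\<^sup>2"] cong: if_cong)
  then show ?thesis
    using norm_on_nonneg[of "basis_set n m" init_state] by (auto simp: power2_eq_1_iff)
qed

lemma query_image_subset:
  "\<phi> permutes A \<Longrightarrow> (if d then \<phi> else inv \<phi>) ` A \<subseteq> A"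
  using permutes_image permutes_inv by auto

lemma norm_on_run_state:
  assumes m: "1 \<le> m" and U: "\<forall>t\<le>T. is_unitary (basis_set n m) (Us t)"
    and \<phi>: "\<phi> permutes {..<2^(2*n)}" and "t \<le> T"
  shows "norm_on (basis_set n m) (run_state n m Us ds \<phi> t) = 1"
  using \<open>t \<le> T\<close>
proof (induction t)
  case 0
  then show ?case
    using U norm_on_init_state[OF m] by (simp add: norm_on_apply_op finite_basis_set)
next
  case (Suc t)
  then show ?case
    using U norm_on_query_op[OF query_image_subset[OF \<phi>], where S=UNIV]
    by (simp add: norm_on_apply_op finite_basis_set)
qed

lemma success_prob_eq_norm_on:
  "success_prob n m Us ds out T \<phi> =
     (norm_on (basis_set n m \<inter> {s. out s \<in> zero_pairs n \<phi>}) (run_state n m Us ds \<phi> T))\<^sup>2"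
  unfolding success_prob_def power2_norm_on
  by (simp add: sum.inter_filter[OF finite_basis_set] Int_def)

lemma success_prob_le_1:
  assumes "1 \<le> m" and "\<forall>t\<le>T. is_unitary (basis_set n m) (Us t)"
    and "\<phi> permutes {..<2^(2*n)}"
  shows "success_prob n m Us ds out T \<phi> \<le> 1"
proof -
  have "norm_on (basis_set n m \<inter> {s. out s \<in> zero_pairs n \<phi>}) (run_state n m Us ds \<phi> T)
      \<le> norm_on (basis_set n m) (run_state n m Us ds \<phi> T)"
    by (intro norm_on_mono finite_basis_set) auto
  also have "\<dots> = 1"
    using norm_on_run_state[OF assms] by simp
  finally show ?thesis
    unfolding success_prob_eq_norm_on by (simp add: norm_on_nonneg power_le_one)
qed

text \<open>Each query can move the two runs apart by at most twice the weight that the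
  current state puts on query inputs where the oracles differ.\<close>

lemma norm_on_run_state_diff_le:
  assumes U: "\<forall>t\<le>T. is_unitary (basis_set n m) (Us t)"
    and \<phi>: "\<phi> permutes {..<2^(2*n)}" and \<phi>': "\<phi>' permutes {..<2^(2*n)}"
    and agree: "\<And>a. a \<notin> S \<Longrightarrow> \<phi> a = \<phi>' a \<and> inv \<phi> a = inv \<phi>' a"
    and "t \<le> T"
  shows "norm_on (basis_set n m) (\<lambda>s. run_state n m Us ds \<phi> t s - run_state n m Us ds \<phi>' t s)
     \<le> 2 * (\<Sum>u<t. norm_on (basis_set n m \<inter> {s. fst s \<in> S}) (run_state n m Us ds \<phi>' u))"
  using \<open>t \<le> T\<close>
proof (induction t)
  case 0
  then show ?case by (simp add: norm_on_def L2_set_def)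
next
  case (Suc t)
  define B where "B = basis_set n m"
  define C where "C = B \<inter> {s. fst s \<in> S}"
  define f where "f = (if ds t then \<phi> else inv \<phi>)"
  define g where "g = (if ds t then \<phi>' else inv \<phi>')"
  define x where "x = run_state n m Us ds \<phi> t"
  define y where "y = run_state n m Us ds \<phi>' t"
  have f: "f ` {..<2^(2*n)} \<subseteq> {..<2^(2*n)}" and g: "g ` {..<2^(2*n)} \<subseteq> {..<2^(2*n)}"
    unfolding f_def g_def using query_image_subset \<phi> \<phi>' by blast+
  have "norm_on B (\<lambda>s. run_state n m Us ds \<phi> (Suc t) s - run_state n m Us ds \<phi>' (Suc t) s)
      = norm_on B (\<lambda>s. query_op B f x s - query_op B g y s)"
    using U Suc.prems
    by (simp add: apply_op_diff[symmetric] norm_on_apply_op finite_basis_set B_def f_def g_def x_def y_def)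
  also have "\<dots> = norm_on B (\<lambda>s. query_op B f (\<lambda>s. x s - y s) s + (query_op B f y s - query_op B g y s))"
    by (simp add: query_op_diff)
  also have "\<dots> \<le> norm_on B (query_op B f (\<lambda>s. x s - y s))
      + norm_on B (\<lambda>s. query_op B f y s - query_op B g y s)"
    by (rule norm_on_add_le)
  also have "\<dots> \<le> norm_on B (\<lambda>s. x s - y s) + 2 * norm_on C y"
    using norm_on_query_op[OF f, where S=UNIV] norm_on_query_op_diff_le[OF f g, of S m y]
    by (simp add: B_def C_def f_def g_def agree)
  also have "\<dots> \<le> 2 * (\<Sum>u<Suc t. norm_on C (run_state n m Us ds \<phi>' u))"
    using Suc by (simp add: B_def C_def x_def y_def)
  finally show ?case by (simp add: B_def C_def)
qed

lemma success_prob_disjoint_variants_bound: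
  fixes \<phi> :: "nat \<Rightarrow> nat \<Rightarrow> nat" and S :: "nat \<Rightarrow> nat set" and \<epsilon> :: real
  assumes m: "1 \<le> m" and U: "\<forall>t\<le>T. is_unitary (basis_set n m) (Us t)"
    and \<phi>\<^sub>0: "\<phi>\<^sub>0 permutes {..<2^(2*n)}"
    and \<phi>: "\<And>i. i < M \<Longrightarrow> \<phi> i permutes {..<2^(2*n)}"
    and agree: "\<And>i a. i < M \<Longrightarrow> a \<notin> S i \<Longrightarrow> \<phi> i a = \<phi>\<^sub>0 a \<and> inv (\<phi> i) a = inv \<phi>\<^sub>0 a"
    and disjoint_S: "disjoint_family_on S {..<M}"
    and disjoint_zero_pairs: "disjoint_family_on (\<lambda>i. zero_pairs n (\<phi> i)) {..<M}"
    and success: "\<And>i. i < M \<Longrightarrow> \<epsilon> \<le> success_prob n m Us ds out T (\<phi> i)"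
    and "0 \<le> \<epsilon>"
  shows "real M * \<epsilon> \<le> (1 + 2 * real T)\<^sup>2"
proof -
  define B where "B = basis_set n m"
  define A where "A i = B \<inter> {s. out s \<in> zero_pairs n (\<phi> i)}" for i
  define C where "C i = B \<inter> {s. fst s \<in> S i}" for i
  define \<psi> where "\<psi> = run_state n m Us ds \<phi>\<^sub>0"
  have norm_\<psi>: "norm_on B (\<psi> u) = 1" if "u \<le> T" for u
    using norm_on_run_state[OF m U \<phi>\<^sub>0 that] by (simp add: B_def \<psi>_def)
  have variant: "sqrt \<epsilon> \<le> norm_on (A i) (\<psi> T) + 2 * (\<Sum>u<T. norm_on (C i) (\<psi> u))"
    if i: "i < M" for i
  proof -
    define \<chi> where "\<chi> = run_state n m Us ds (\<phi> i) T"
    have "sqrt \<epsilon> \<le> norm_on (A i) \<chi>"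
      using success[OF i] by (simp add: real_le_lsqrt norm_on_nonneg success_prob_eq_norm_on A_def B_def \<chi>_def)
    also have "\<dots> \<le> norm_on (A i) (\<psi> T) + norm_on (A i) (\<lambda>s. \<chi> s - \<psi> T s)"
      using norm_on_add_le[of "A i" "\<psi> T" "\<lambda>s. \<chi> s - \<psi> T s"] by simp
    also have "norm_on (A i) (\<lambda>s. \<chi> s - \<psi> T s) \<le> norm_on B (\<lambda>s. \<chi> s - \<psi> T s)"
      by (rule norm_on_mono) (auto simp: A_def B_def finite_basis_set)
    also have "\<dots> \<le> 2 * (\<Sum>u<T. norm_on (C i) (\<psi> u))"
      unfolding B_def C_def \<chi>_def \<psi>_def
      by (rule norm_on_run_state_diff_le[OF U \<phi>[OF i] \<phi>\<^sub>0 agree[OF i]]) auto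
    finally show ?thesis by simp
  qed
  have "real M * sqrt \<epsilon>
      \<le> (\<Sum>i<M. norm_on (A i) (\<psi> T)) + 2 * (\<Sum>u<T. \<Sum>i<M. norm_on (C i) (\<psi> u))"
    using sum_mono[of "{..<M}" "\<lambda>_. sqrt \<epsilon>", OF variant]
    by (simp add: sum.distrib sum_distrib_left sum.swap[of _ "{..<T}"])
  also have "(\<Sum>i<M. norm_on (A i) (\<psi> T)) \<le> sqrt (card {..<M}) * norm_on B (\<psi> T)"
  proof (rule sum_norm_on_disjoint_le)
    show "disjoint_family_on A {..<M}"
      using disjoint_zero_pairs unfolding A_def disjoint_family_on_def by blast
  qed (auto simp: A_def B_def finite_basis_set)
  also have "(\<Sum>u<T. \<Sum>i<M. norm_on (C i) (\<psi> u))
      \<le> (\<Sum>u<T. sqrt (card {..<M}) * norm_on B (\<psi> u))"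
  proof (intro sum_mono sum_norm_on_disjoint_le)
    show "disjoint_family_on C {..<M}"
      using disjoint_S unfolding C_def disjoint_family_on_def by blast
  qed (auto simp: C_def B_def finite_basis_set)
  finally have "sqrt M * sqrt (M * \<epsilon>) \<le> sqrt M * (1 + 2 * real T)"
    by (simp add: norm_\<psi> real_sqrt_mult algebra_simps)
  then have "M = 0 \<or> sqrt (M * \<epsilon>) \<le> 1 + 2 * real T"
    by (auto simp: mult_le_cancel_left)
  then show ?thesis
    using \<open>0 \<le> \<epsilon>\<close> by (auto dest: sqrt_le_D)
qed

section \<open>The hard permutations\<close>

lemma involution_permutes:
  assumes "\<And>a. f (f a) = a" and "\<And>a. a \<notin> A \<Longrightarrow> f a = a"
  shows "f permutes A"
  unfolding permutes_def using assms by metis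

definition pair_swap :: "nat \<Rightarrow> nat \<Rightarrow> nat" where
  "pair_swap L a = (if a < L then if even a then Suc a else a - 1 else a)"

lemma pair_swap_pair_swap:
  assumes "even L" shows "pair_swap L (pair_swap L a) = a"
proof -
  have "Suc a < L" if "even a" "a < L"
    using that assms by (metis Suc_lessI even_Suc)
  then show ?thesis
    unfolding pair_swap_def by (auto elim: oddE)
qed

lemma inv_pair_swap: "even L \<Longrightarrow> inv (pair_swap L) = pair_swap L"
  by (rule inv_equality) (simp_all add: pair_swap_pair_swap)

lemma pair_swap_permutes: "even L \<Longrightarrow> pair_swap L permutes {..<L}"
  by (rule involution_permutes[OF pair_swap_pair_swap]) (simp_all add: pair_swap_def)

lemma pair_swap_row:
  assumes "even N" and "a < N * N"
  shows "pair_swap (N * N) a = a div N * N + pair_swap N (a mod N)"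
proof -
  define q r where "q = a div N" and "r = a mod N"
  have N: "0 < N" using assms by (cases "N = 0") auto
  have a: "a = q * N + r" by (simp add: q_def r_def)
  have "r < N" using N by (simp add: r_def)
  have parity: "even a \<longleftrightarrow> even r"
    using \<open>even N\<close> by (simp add: a)
  show ?thesis
  proof (cases "even r")
    case True
    then have "Suc r < N"
      using \<open>r < N\<close> \<open>even N\<close> by (metis Suc_lessI even_Suc)
    then show ?thesis
      using True parity assms(2) by (simp add: pair_swap_def a flip: q_def r_def)
  next
    case False
    then have "0 < r" by (cases r) auto
    then show ?thesis
      using False parity assms(2) \<open>r < N\<close> by (simp add: pair_swap_def a flip: q_def r_def)
  qed
qed

text \<open>Viewing \<open>{0,1}\<^sup>2\<^sup>n\<close> as an \<open>N \<times> N\<close> grid with rows \<open>x\<close>, the support of block \<open>i\<close>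
  consists of the first two entries \<open>x\<parallel>0\<^sup>n\<close>, \<open>x\<parallel>0\<^sup>n\<^sup>-\<^sup>1 1\<close> of the rows \<open>x\<close> in block \<open>i\<close>.\<close>

definition block_support :: "nat \<Rightarrow> nat \<Rightarrow> nat \<Rightarrow> nat set" where
  "block_support N K i = {a. a div N div K = i \<and> a mod N < 2}"

definition block_fixing :: "nat \<Rightarrow> nat \<Rightarrow> nat \<Rightarrow> nat \<Rightarrow> nat" where
  "block_fixing N K i a = (if a \<in> block_support N K i then a else pair_swap (N * N) a)"

lemma pair_swap_block_support:
  assumes "even N" and "a \<in> block_support N K i"
  shows "pair_swap (N * N) a \<in> block_support N K i"
proof (cases "a < N * N")
  case True
  have "2 \<le> N" using True \<open>even N\<close> by (cases "N = 0") (auto elim: evenE)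
  have "a mod N < 2" using assms(2) by (simp add: block_support_def)
  then have "pair_swap N (a mod N) < 2"
    using \<open>2 \<le> N\<close> by (auto simp: pair_swap_def less_2_cases_iff)
  moreover from this have "pair_swap N (a mod N) < N"
    using \<open>2 \<le> N\<close> by linarith
  ultimately show ?thesis
    using assms True by (simp add: pair_swap_row block_support_def)
qed (use assms in \<open>simp add: pair_swap_def\<close>)

lemma block_fixing_involution:
  assumes "even N" shows "block_fixing N K i (block_fixing N K i a) = a"
  using pair_swap_block_support[OF assms, of "pair_swap (N * N) a" K i]
  by (auto simp: block_fixing_def pair_swap_pair_swap assms)

lemma block_fixing_permutes:
  assumes "even N" shows "block_fixing N K i permutes {..<N * N}"
proof (rule involution_permutes)
  show "block_fixing N K i a = a" if "a \<notin> {..<N * N}" for a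
    using that by (simp add: block_fixing_def pair_swap_def)
qed (rule block_fixing_involution[OF assms])

lemma inv_block_fixing: "even N \<Longrightarrow> inv (block_fixing N K i) = block_fixing N K i"
  by (rule inv_equality) (simp_all add: block_fixing_involution)

lemma div_eq_iff_in_block: "0 < (K::nat) \<Longrightarrow> x div K = i \<longleftrightarrow> x \<in> {i * K..<i * K + K}"
  by (metis atLeastLessThan_iff add.commute div_nat_eqI dividend_less_times_div mult.commute
      mult_Suc times_div_less_eq_dividend)

lemma zero_pairs_block_fixing:
  assumes "0 < n" and K: "0 < K" and block: "i * K + K \<le> 2 ^ n"
  shows "zero_pairs n (block_fixing (2 ^ n) K i) = (\<lambda>x. (x, x)) ` {i * K..<i * K + K}"
proof -
  define N :: nat where "N = 2 ^ n"
  have "even N"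
    using \<open>0 < n\<close> by (simp add: N_def)
  have "2 \<le> N"
    using \<open>0 < n\<close> power_increasing[of 1 n "2::nat"] by (simp add: N_def)
  have row: "block_fixing N K i (x * N) =
      (if x div K = i then x * N else x * N + 1)" if "x < N" for x
  proof -
    have "x * N < N * N" using that \<open>2 \<le> N\<close> by simp
    then show ?thesis
      using \<open>even N\<close> \<open>2 \<le> N\<close>
      by (simp add: block_fixing_def block_support_def pair_swap_row pair_swap_def)
  qed
  have no_carry: "x * N + 1 \<noteq> y * N" for x y
  proof
    assume "x * N + 1 = y * N"
    then have "(x * N + 1) mod N = (y * N) mod N" by simp
    then show False using \<open>2 \<le> N\<close> by (simp add: mod_Suc)
  qed
  have in_grid: "x < N" if "x \<in> {i * K..<i * K + K}" for x
    using that block by (simp add: N_def)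
  have "(x, y) \<in> zero_pairs n (block_fixing N K i) \<longleftrightarrow> x \<in> {i * K..<i * K + K} \<and> y = x" for x y
  proof (cases "x < N \<and> y < N")
    case True
    then show ?thesis
      using row[of x] no_carry[of x y] \<open>2 \<le> N\<close>
      by (auto simp: zero_pairs_def N_def[symmetric] div_eq_iff_in_block[OF K] split: if_splits)
  next
    case False
    then show ?thesis
      using in_grid by (auto simp: zero_pairs_def N_def)
  qed
  then show ?thesis
    by (auto simp: N_def)
qed

lemma success_prob_block_fixing_bound:
  fixes \<epsilon> :: real
  assumes "0 < n" and "0 < K"
    and m: "1 \<le> m" and U: "\<forall>t\<le>T. is_unitary (basis_set n m) (Us t)"
    and "0 \<le> \<epsilon>"
    and success: "\<forall>\<phi>. \<phi> permutes {..<2^(2*n)} \<and> card (zero_pairs n \<phi>) = K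
              \<longrightarrow> success_prob n m Us ds out T \<phi> \<ge> \<epsilon>"
  shows "real (2 ^ n div K) * \<epsilon> \<le> (1 + 2 * real T)\<^sup>2"
proof -
  define N :: nat where "N = 2 ^ n"
  define M where "M = N div K"
  have "even N" using \<open>0 < n\<close> by (simp add: N_def)
  have grid: "2 ^ (2 * n) = N * N" by (simp add: N_def mult_2 power_add)
  have block: "i * K + K \<le> N" if "i < M" for i
  proof -
    have "Suc i * K \<le> M * K" using that by (intro mult_le_mono1) simp
    also have "\<dots> \<le> N" by (simp add: M_def)
    finally show ?thesis by simp
  qed
  have zero_pairs: "zero_pairs n (block_fixing N K i) = (\<lambda>x. (x, x)) ` {i * K..<i * K + K}"
    if "i < M" for i
    using zero_pairs_block_fixing[OF \<open>0 < n\<close> \<open>0 < K\<close>] block[OF that] by (simp add: N_def)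
  show ?thesis
    unfolding N_def[symmetric] M_def[symmetric]
  proof (rule success_prob_disjoint_variants_bound[OF m U])
    show "pair_swap (N * N) permutes {..<2^(2*n)}"
      unfolding grid using \<open>even N\<close> by (simp add: pair_swap_permutes)
    show "block_fixing N K i permutes {..<2^(2*n)}" for i
      unfolding grid using block_fixing_permutes \<open>even N\<close> by blast
    show "block_fixing N K i a = pair_swap (N * N) a
        \<and> inv (block_fixing N K i) a = inv (pair_swap (N * N)) a"
      if "a \<notin> block_support N K i" for i a
      using that \<open>even N\<close> by (simp add: block_fixing_def inv_block_fixing inv_pair_swap)
    show "disjoint_family_on (block_support N K) {..<M}"
      by (auto simp: disjoint_family_on_def block_support_def)
    show "disjoint_family_on (\<lambda>i. zero_pairs n (block_fixing N K i)) {..<M}"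
      unfolding disjoint_family_on_def
      using div_eq_iff_in_block[OF \<open>0 < K\<close>] by (auto simp: zero_pairs) (metis atLeastLessThan_iff)
    show "\<epsilon> \<le> success_prob n m Us ds out T (block_fixing N K i)" if "i < M" for i
      using success block_fixing_permutes[OF \<open>even N\<close>] zero_pairs[OF that]
      by (simp add: grid card_image inj_on_def)
  qed fact
qed

lemma le_divide_of_div_mult_le:
  fixes \<epsilon> c :: real
  assumes "0 < K" and "K \<le> N" and "0 \<le> \<epsilon>" and bound: "real (N div K) * \<epsilon> \<le> c"
  shows "\<epsilon> \<le> 2 * c * real K / real N"
proof -
  define M where "M = N div K"
  have "1 \<le> M"
    using assms(1,2) by (simp add: M_def div_greater_zero_iff Suc_le_eq)
  then have "K \<le> M * K"
    by simp
  moreover have "N = M * K + N mod K" and "N mod K < K"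
    using assms(1) by (simp_all add: M_def)
  ultimately have "N \<le> 2 * (M * K)"
    by linarith
  then have "real N \<le> 2 * (real M * real K)"
    using of_nat_le_iff[where 'a=real, of N "2 * (M * K)"] by simp
  then have "\<epsilon> * real N \<le> \<epsilon> * (2 * (real M * real K))"
    using \<open>0 \<le> \<epsilon>\<close> by (rule mult_left_mono)
  also have "\<dots> = 2 * real K * (real M * \<epsilon>)"
    by (simp add: algebra_simps)
  also have "\<dots> \<le> 2 * real K * c"
    using bound by (intro mult_left_mono) (simp_all add: M_def)
  finally show ?thesis
    using assms(1,2) by (simp add: pos_le_divide_eq mult_ac)
qed

theorem lemma4:
  fixes n K T m :: nat and \<epsilon> :: real
    and Us :: "nat \<Rightarrow> qop" and ds :: "nat \<Rightarrow> bool" and out :: "qbasis \<Rightarrow> nat \<times> nat"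
  assumes "1 \<le> K" and "K \<le> 2^n"
    and "1 \<le> m"
    and "\<forall>t\<le>T. is_unitary (basis_set n m) (Us t)"
    and "\<epsilon> > 0"
    and "\<forall>\<phi>. \<phi> permutes {..<2^(2*n)} \<and> card (zero_pairs n \<phi>) = K
              \<longrightarrow> success_prob n m Us ds out T \<phi> \<ge> \<epsilon>"
  shows "\<epsilon> \<le> 8 * (real T + 1)^2 * real K / 2^n"
proof -
  have "\<epsilon> \<le> 2 * (4 * (real T + 1)\<^sup>2) * real K / 2 ^ n"
  proof (cases "n = 0")
    case True
    then have "K = 1" and "zero_pairs n id = {(0, 0)}"
      using assms(1,2) by (auto simp: zero_pairs_def)
    then have "\<epsilon> \<le> success_prob n m Us ds out T id"
      using assms(6) by simp
    also have "\<dots> \<le> 1"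
      using success_prob_le_1[OF assms(3,4)] by simp
    also have "\<dots> \<le> (real T + 1)\<^sup>2"
      by (simp add: one_le_power)
    also have "\<dots> \<le> 8 * (real T + 1)\<^sup>2"
      by simp
    finally show ?thesis
      using True \<open>K = 1\<close> by simp
  next
    case False
    have "real (2 ^ n div K) * \<epsilon> \<le> (1 + 2 * real T)\<^sup>2"
      by (rule success_prob_block_fixing_bound) (use False assms in auto)
    also have "\<dots> \<le> 4 * (real T + 1)\<^sup>2"
      by (simp add: power2_eq_square algebra_simps)
    finally have "real (2 ^ n div K) * \<epsilon> \<le> 4 * (real T + 1)\<^sup>2" .
    from le_divide_of_div_mult_le[OF _ assms(2) _ this] assms(1,5) show ?thesis
      by simp
  qed
  then show ?thesis
    by simp
qed

end
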